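(* For $I=(z_1^3-z_3z_2,\,z_2^2)\subset\mathcal{O}_3$ one has $\mathbf{T}_2(I)=3$ and $D_2(I)\geq 4$. More precisely, let $V=\{z_1^3-z_3z_2=0\}\subset\mathbb{C}^3$; for every plane $S_{a,b}=\{z_3+az_1+bz_2=0\}$ with $a\neq0$, $b\neq0$, the germ $V\cap S_{a,b}$ at $0$ has an irreducible 1-dimensional component with minimal parametrization $\gamma_{a,b}$ such that $\frac{v(g\circ\gamma_{a,b})}{v(\gamma_{a,b})}\geq 4$ for all $g\in I$.
   Context: $\mathcal{O}_n$ denotes the local ring of germs at $0\in\mathbb{C}^n$ of holomorphic functions. $\Gamma$ denotes the set of non-constant germs of holomorphic maps $z\colon(\mathbb{C},0)\to(\mathbb{C}^n,0)$; $v(z)$ is the order of vanishing of $z$ at $0$ and $v(g\circ z)$ the order of vanishing of $g\circ z$ ($v(0)=\infty$). For an ideal $I\subset\mathcal{O}_n$, $\mathbf{T}_1(I)=\sup_{z\in\Gamma}\inf_{g\in I}\frac{v(g\circ z)}{v(z)}$, and $\mathbf{T}_q(I)=\inf_{\{w_1,\dots,w_{q-1}\}}\mathbf{T}_1(I,w_1,\dots,w_{q-1})$ over all linear functions $w_j$. Catlin $q$-type: let $G^{n-q+1}$ be the Grassmannian of $(n-q+1)$-dimensional linear subspaces of $\mathbb{C}^n$. For a germ $(V^q,0)$ of a $q$-dimensional complex analytic variety, for $S$ in a non-empty Zariski open subset of $G^{n-q+1}$ the germ $V^q\cap S$ at $0$ consists of finitely many irreducible 1-dimensional components with minimal parametrizations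 $\gamma_S^k$, $k=1,\dots,P$; for each $g\in\mathcal{O}_n$ the quantity $\max_{k}\frac{v(g\circ\gamma_S^k)}{v(\gamma_S^k)}$ takes one common value (its generic value) for all $S$ in a non-empty Zariski open subset of $G^{n-q+1}$. Then $D_q(I)=\sup_{V^q}\inf_{g\in I}\big(\text{generic value over }S\text{ of }\max_{k}\frac{v(g\circ\gamma_S^k)}{v(\gamma_S^k)}\big)$. *)

theory Defs
  imports "HOL-Analysis.Analysis"
begin

definition holo_n :: "(complex^'n::finite) set \<Rightarrow> (complex^'n \<Rightarrow> complex) \<Rightarrow> bool" where
  "holo_n U f \<longleftrightarrow>
     (\<forall>x\<in>U. \<exists>L. (f has_derivative L) (at x) \<and> (\<forall>c v. L (c *s v) = c * L v))"

text \<open>Germs at 0 of holomorphic functions (elements of O_n), represented by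
  functions holomorphic on some ball around 0 (values elsewhere irrelevant).\<close>
definition germ_holo :: "(complex^'n::finite \<Rightarrow> complex) \<Rightarrow> bool" where
  "germ_holo f \<longleftrightarrow> (\<exists>e>0. holo_n (ball 0 e) f)"

definition ideal_gen :: "(complex^'n::finite \<Rightarrow> complex) list \<Rightarrow> (complex^'n \<Rightarrow> complex) set" where
  "ideal_gen F = {g. \<exists>e>0. holo_n (ball 0 e) g \<and>
      (\<exists>hs. length hs = length F \<and> (\<forall>h\<in>set hs. holo_n (ball 0 e) h) \<and>
            (\<forall>x\<in>ball 0 e. g x = (\<Sum>i<length F. (hs!i) x * (F!i) x)))}"

definition ord0 :: "(complex \<Rightarrow> complex) \<Rightarrow> enat" where
  "ord0 h = (if \<forall>k. (deriv ^^ k) h 0 = 0 then \<infinity>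
             else enat (LEAST k. (deriv ^^ k) h 0 \<noteq> 0))"

definition curves :: "(complex \<Rightarrow> complex^'n::finite) set" where
  "curves = {z. (\<exists>e>0. \<forall>i. (\<lambda>t. z t $ i) holomorphic_on ball 0 e) \<and> z 0 = 0 \<and>
                \<not> (\<exists>d>0. \<forall>t\<in>ball 0 d. z t = 0)}"

definition cord :: "(complex \<Rightarrow> complex^'n::finite) \<Rightarrow> enat" where
  "cord z = Min (range (\<lambda>i. ord0 (\<lambda>t. z t $ i)))"

definition vratio :: "(complex^'n::finite \<Rightarrow> complex) \<Rightarrow> (complex \<Rightarrow> complex^'n) \<Rightarrow> ereal" where
  "vratio g z = (case ord0 (g \<circ> z) of
                   \<infinity> \<Rightarrow> \<infinity>
                 | enat m \<Rightarrow> (case cord z of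
                                 \<infinity> \<Rightarrow> 0
                               | enat k \<Rightarrow> ereal (real m / real k)))"

definition T1 :: "(complex^'n::finite \<Rightarrow> complex) set \<Rightarrow> ereal" where
  "T1 I = (SUP z\<in>curves. INF g\<in>I. vratio g z)"

definition linear_fun :: "(complex^'n::finite \<Rightarrow> complex) \<Rightarrow> bool" where
  "linear_fun w \<longleftrightarrow> (\<exists>c::complex^'n. \<forall>x. w x = (\<Sum>i\<in>UNIV. c $ i * x $ i))"

definition Tq :: "nat \<Rightarrow> (complex^'n::finite \<Rightarrow> complex) list \<Rightarrow> ereal" where
  "Tq q F = (INF W\<in>{W. length W = q - 1 \<and> (\<forall>w\<in>set W. linear_fun w)}. T1 (ideal_gen (F @ W)))"

text \<open>gamma is a minimal parametrization of an irreducible 1-dimensional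
  component of the germ at 0 of the (one-dimensional) set X: a non-constant
  curve germ whose image near 0 lies in X and which is injective near 0.\<close>
definition comp_param :: "(complex^'n::finite) set \<Rightarrow> (complex \<Rightarrow> complex^'n) \<Rightarrow> bool" where
  "comp_param X \<gamma> \<longleftrightarrow> \<gamma> \<in> curves \<and>
      (\<exists>d>0. (\<forall>t\<in>ball 0 d. \<gamma> t \<in> X) \<and> inj_on \<gamma> (ball 0 d))"

end

(* For w = z3 the ideal
   (f1, f2, z3) contains the cube of every coordinate, so along any curve the cube of a
   coordinate of least order has ratio 3.  Conversely, for w = c1 z1 + c2 z2 + c3 z3 there is a
   curve along which all of f1, f2, w vanish to at least three times the order of the curve:
   the z3-axis if c3 = 0; the cusp (t^2, t^3, -b t^3) in the plane w = 0 if c1 = 0 (order 2,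
   generators of order 6); otherwise a parametrisation of order 1 of a branch of V in the plane
   w = 0, along which f1 vanishes identically and f2 = z2^2 has order 4.  This last curve also
   gives D_2(I) >= 4.  Orders of members of an ideal along a curve are bounded below through
   divisibility by powers of t, which survives multiplication by the holomorphic coefficients. *)

theory Submission
  imports
    Defs
    "HOL-Complex_Analysis.Conformal_Mappings"
    "HOL-Complex_Analysis.Complex_Singularities"
begin

(* Unlike ord0, divisibility by t^n is stable under sums and holomorphic multiples;
   lower bounds for orders are proved through it. *)
definition vanishes_to_order :: "nat \<Rightarrow> (complex \<Rightarrow> complex) \<Rightarrow> bool" where
  "vanishes_to_order n \<phi> \<longleftrightarrow>
     (\<exists>r>0. \<exists>q. q holomorphic_on ball 0 r \<and> (\<forall>t\<in>ball 0 r. \<phi> t = t ^ n * q t))"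

lemma vanishes_to_orderI:
  assumes "q holomorphic_on UNIV" "\<And>t. \<phi> t = t ^ n * q t"
  shows "vanishes_to_order n \<phi>"
  unfolding vanishes_to_order_def
  using assms(2) holomorphic_on_subset[OF assms(1), of "ball 0 1"]
  by (intro exI[of _ 1] conjI exI[of _ q]) auto

lemma vanishes_to_order_0: "vanishes_to_order n (\<lambda>_. 0)"
  by (rule vanishes_to_orderI[of "\<lambda>_. 0"]) auto

lemma vanishes_to_order_add:
  assumes "vanishes_to_order n \<phi>" "vanishes_to_order n \<psi>"
  shows "vanishes_to_order n (\<lambda>t. \<phi> t + \<psi> t)"
proof -
  obtain r p where r: "r > 0" "p holomorphic_on ball 0 r" "\<forall>t\<in>ball 0 r. \<phi> t = t ^ n * p t"
    using assms(1) unfolding vanishes_to_order_def by blast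
  obtain s q where s: "s > 0" "q holomorphic_on ball 0 s" "\<forall>t\<in>ball 0 s. \<psi> t = t ^ n * q t"
    using assms(2) unfolding vanishes_to_order_def by blast
  have "(\<lambda>t. p t + q t) holomorphic_on ball 0 (min r s)"
    using r(2) s(2) by (auto intro!: holomorphic_intros)
  then show ?thesis
    unfolding vanishes_to_order_def using r s
    by (intro exI[of _ "min r s"] conjI exI[of _ "\<lambda>t. p t + q t"]) (auto simp: distrib_left)
qed

lemma vanishes_to_order_mult_left:
  assumes "d > 0" "\<psi> holomorphic_on ball 0 d" "vanishes_to_order n \<phi>"
  shows "vanishes_to_order n (\<lambda>t. \<psi> t * \<phi> t)"
proof -
  obtain r q where r: "r > 0" "q holomorphic_on ball 0 r" "\<forall>t\<in>ball 0 r. \<phi> t = t ^ n * q t"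
    using assms(3) unfolding vanishes_to_order_def by blast
  have "(\<lambda>t. \<psi> t * q t) holomorphic_on ball 0 (min d r)"
    using assms(2) r(2) by (auto intro!: holomorphic_intros)
  then show ?thesis
    unfolding vanishes_to_order_def using assms(1) r
    by (intro exI[of _ "min d r"] conjI exI[of _ "\<lambda>t. \<psi> t * q t"]) (auto simp: algebra_simps)
qed

lemma vanishes_to_order_sum:
  assumes "finite I" "\<And>i. i \<in> I \<Longrightarrow> vanishes_to_order n (\<phi> i)"
  shows "vanishes_to_order n (\<lambda>t. \<Sum>i\<in>I. \<phi> i t)"
  using assms
  by (induction I rule: finite_induct) (auto intro: vanishes_to_order_0 vanishes_to_order_add)

lemma vanishes_to_order_cong_ball:
  assumes "vanishes_to_order n \<psi>" "d > 0" "\<And>t. t \<in> ball 0 d \<Longrightarrow> \<phi> t = \<psi> t"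
  shows "vanishes_to_order n \<phi>"
proof -
  obtain r q where r: "r > 0" "q holomorphic_on ball 0 r" "\<forall>t\<in>ball 0 r. \<psi> t = t ^ n * q t"
    using assms(1) unfolding vanishes_to_order_def by blast
  show ?thesis
    unfolding vanishes_to_order_def using assms(2,3) r
    by (intro exI[of _ "min d r"] conjI exI[of _ q]) auto
qed

lemma higher_deriv_power_factor_at_0:
  fixes q \<phi> :: "complex \<Rightarrow> complex"
  assumes r: "r > 0" and q: "q holomorphic_on ball 0 r"
    and \<phi>: "\<And>t. t \<in> ball 0 r \<Longrightarrow> \<phi> t = t ^ n * q t"
  shows "j < n \<Longrightarrow> (deriv ^^ j) \<phi> 0 = 0"
    and "(deriv ^^ n) \<phi> 0 = fact n * q 0"
proof -
  have "eventually (\<lambda>t. \<phi> t = t ^ n * q t) (nhds 0)"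
    unfolding eventually_nhds using \<phi> r by (intro exI[of _ "ball 0 r"]) auto
  then have eq: "(deriv ^^ j) \<phi> 0 = (deriv ^^ j) (\<lambda>t. t ^ n * q t) 0" for j
    by (rule higher_deriv_cong_ev) simp
  have pw: "(deriv ^^ i) (\<lambda>t::complex. t ^ n) 0 =
      pochhammer (of_nat (Suc n - i)) i * 0 ^ (n - i)" for i
    using higher_deriv_power[of i 0 n 0] by simp
  have leibniz: "(deriv ^^ j) (\<lambda>t. t ^ n * q t) 0 =
      (\<Sum>i = 0..j. of_nat (j choose i) * (deriv ^^ i) (\<lambda>t. t ^ n) 0 * (deriv ^^ (j - i)) q 0)" for j
    by (rule higher_deriv_mult[OF _ q]) (use r in \<open>auto intro!: holomorphic_intros\<close>)
  have power_0: "(deriv ^^ i) (\<lambda>t::complex. t ^ n) 0 = 0" if "i \<noteq> n" for i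
    using that by (cases "i < n") (auto simp: pw pochhammer_0_left)
  show "j < n \<Longrightarrow> (deriv ^^ j) \<phi> 0 = 0"
    by (simp add: eq leibniz power_0)
  have "(deriv ^^ n) \<phi> 0 =
      (\<Sum>i\<in>{n}. of_nat (n choose i) * (deriv ^^ i) (\<lambda>t. t ^ n) 0 * (deriv ^^ (n - i)) q 0)"
    unfolding eq leibniz by (rule sum.mono_neutral_right) (auto simp: power_0)
  also have "\<dots> = fact n * q 0"
    by (simp add: pw pochhammer_fact)
  finally show "(deriv ^^ n) \<phi> 0 = fact n * q 0" .
qed

lemma ord0_ge_if_vanishes_to_order:
  assumes "vanishes_to_order n \<phi>"
  shows "enat n \<le> ord0 \<phi>"
proof -
  obtain r q where "r > 0" "q holomorphic_on ball 0 r" "\<forall>t\<in>ball 0 r. \<phi> t = t ^ n * q t"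
    using assms unfolding vanishes_to_order_def by blast
  then have below: "(deriv ^^ j) \<phi> 0 = 0" if "j < n" for j
    using higher_deriv_power_factor_at_0(1) that by blast
  show ?thesis
  proof (cases "\<forall>k. (deriv ^^ k) \<phi> 0 = 0")
    case False
    then have "\<not> (LEAST k. (deriv ^^ k) \<phi> 0 \<noteq> 0) < n"
      using below LeastI_ex[of "\<lambda>k. (deriv ^^ k) \<phi> 0 \<noteq> 0"] by blast
    then show ?thesis
      using False by (simp add: ord0_def)
  qed (simp add: ord0_def)
qed

lemma ord0_eq_if_factor:
  assumes "r > 0" "q holomorphic_on ball 0 r"
    and "\<And>t. t \<in> ball 0 r \<Longrightarrow> \<phi> t = t ^ n * q t" and "q 0 \<noteq> 0"
  shows "ord0 \<phi> = enat n"
proof -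
  have nz: "(deriv ^^ n) \<phi> 0 \<noteq> 0"
    using higher_deriv_power_factor_at_0(2)[OF assms(1-3)] assms(4) by simp
  have "(LEAST k. (deriv ^^ k) \<phi> 0 \<noteq> 0) = n"
    by (rule Least_equality)
      (use nz higher_deriv_power_factor_at_0(1)[OF assms(1-3)] in \<open>auto simp: not_less[symmetric]\<close>)
  then show ?thesis
    using nz by (auto simp: ord0_def)
qed

lemma ord0_factor:
  assumes r: "r > 0" and hol: "\<phi> holomorphic_on ball 0 r" and ord: "ord0 \<phi> = enat n"
  obtains q s where "s > 0" "q holomorphic_on ball 0 s"
    "\<And>t. t \<in> ball 0 s \<Longrightarrow> \<phi> t = t ^ n * q t" "q 0 \<noteq> 0"
proof -
  have ex: "\<exists>k. (deriv ^^ k) \<phi> 0 \<noteq> 0" and n: "n = (LEAST k. (deriv ^^ k) \<phi> 0 \<noteq> 0)"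
    using ord by (auto simp: ord0_def split: if_splits)
  have nz: "(deriv ^^ n) \<phi> 0 \<noteq> 0"
    using LeastI_ex[OF ex] n by simp
  have below: "(deriv ^^ i) \<phi> 0 = 0" if "i < n" for i
    using n not_less_Least that by blast
  show ?thesis
  proof (cases "n = 0")
    case True
    then show ?thesis
      using that[of r \<phi>] r hol nz by simp
  next
    case False
    obtain q s where "s > 0" "q holomorphic_on ball 0 s"
        "\<And>t. t \<in> ball 0 s \<Longrightarrow> \<phi> t - \<phi> 0 = (t - 0) ^ n * q t" "\<And>t. t \<in> ball 0 s \<Longrightarrow> q t \<noteq> 0"
      by (rule holomorphic_factor_order_of_zero[OF hol open_ball _ _ nz])
        (use r False below in auto)
    moreover have "\<phi> 0 = 0"
      using below[of 0] False by simp
    ultimately show ?thesis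
      using that[of s q] by auto
  qed
qed

lemma ord0_power:
  assumes "r > 0" "\<phi> holomorphic_on ball 0 r" "ord0 \<phi> = enat k"
  shows "ord0 (\<lambda>t. \<phi> t ^ p) = enat (p * k)"
proof -
  obtain q s where s: "s > 0" "q holomorphic_on ball 0 s"
      "\<And>t. t \<in> ball 0 s \<Longrightarrow> \<phi> t = t ^ k * q t" "q 0 \<noteq> 0"
    using ord0_factor[OF assms] by blast
  show ?thesis
  proof (rule ord0_eq_if_factor[of s "\<lambda>t. q t ^ p"])
    show "(\<lambda>t. q t ^ p) holomorphic_on ball 0 s"
      using s(2) by (intro holomorphic_intros)
    show "\<phi> t ^ p = t ^ (p * k) * q t ^ p" if "t \<in> ball 0 s" for t
      using s(3)[OF that] by (simp add: power_mult_distrib mult.commute[of p k] power_mult)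
  qed (use s in auto)
qed

lemma ord0_infinity_imp_zero:
  assumes "\<phi> holomorphic_on ball 0 r" "ord0 \<phi> = \<infinity>" "t \<in> ball 0 r"
  shows "\<phi> t = 0"
  using assms holomorphic_fun_eq_0_on_ball[of \<phi> 0 r t]
  by (auto simp: ord0_def split: if_splits)

lemma holo_n_const: "holo_n U (\<lambda>_. c)"
  unfolding holo_n_def by (auto intro!: exI[of _ "\<lambda>_. 0"])

lemma holo_n_component: "holo_n U (\<lambda>z. z $ i)"
  unfolding holo_n_def
  by (auto intro!: exI[of _ "\<lambda>v. v $ i"] bounded_linear.has_derivative[OF bounded_linear_vec_nth]
      has_derivative_ident)

lemma holo_n_mult:
  assumes "holo_n U f" "holo_n U g"
  shows "holo_n U (\<lambda>z. f z * g z)"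
  unfolding holo_n_def
proof
  fix x assume "x \<in> U"
  then obtain L M where L: "(f has_derivative L) (at x)" "\<forall>c v. L (c *s v) = c * L v"
    and M: "(g has_derivative M) (at x)" "\<forall>c v. M (c *s v) = c * M v"
    using assms unfolding holo_n_def by meson
  show "\<exists>N. ((\<lambda>z. f z * g z) has_derivative N) (at x) \<and> (\<forall>c v. N (c *s v) = c * N v)"
    using L M
    by (intro exI[of _ "\<lambda>v. f x * M v + L v * g x"] conjI has_derivative_mult)
      (auto simp: algebra_simps)
qed

lemma holo_n_power: "holo_n U f \<Longrightarrow> holo_n U (\<lambda>z. f z ^ n)"
  by (induction n) (auto intro: holo_n_const holo_n_mult)

lemma has_derivative_vec_componentwise:
  fixes \<gamma> :: "complex \<Rightarrow> complex^'n"
  assumes "\<And>i. ((\<lambda>t. \<gamma> t $ i) has_field_derivative d i) (at t)"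
  shows "(\<gamma> has_derivative (\<lambda>s. \<chi> i. s * d i)) (at t)"
proof -
  have "bounded_linear (\<lambda>s::complex. \<chi> i. s * d i)"
    by (auto intro!: linearI simp: vec_eq_iff algebra_simps linear_conv_bounded_linear[symmetric])
  moreover have "((\<lambda>y. ((\<gamma> y - \<gamma> t) - (\<chi> i. (y - t) * d i)) /\<^sub>R norm (y - t)) \<longlongrightarrow> 0) (at t)"
  proof (rule vec_tendstoI)
    fix i
    have "((\<lambda>t. \<gamma> t $ i) has_derivative (\<lambda>s. d i * s)) (at t)"
      using assms[of i] by (simp add: has_field_derivative_def)
    then show "((\<lambda>y. (((\<gamma> y - \<gamma> t) - (\<chi> i. (y - t) * d i)) /\<^sub>R norm (y - t)) $ i) \<longlongrightarrow> 0 $ i) (at t)"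
      by (simp add: has_derivative_def mult.commute)
  qed
  ultimately show ?thesis
    by (simp add: has_derivative_def)
qed

lemma holomorphic_on_holo_n_comp:
  fixes \<gamma> :: "complex \<Rightarrow> complex^'n"
  assumes h: "holo_n U h" and \<gamma>: "\<And>i. (\<lambda>t. \<gamma> t $ i) holomorphic_on S" and "open S"
    and "\<gamma> ` S \<subseteq> U"
  shows "(\<lambda>t. h (\<gamma> t)) holomorphic_on S"
  unfolding holomorphic_on_open[OF \<open>open S\<close>]
proof
  fix t assume "t \<in> S"
  define d where "d i = deriv (\<lambda>t. \<gamma> t $ i) t" for i
  have "(\<gamma> has_derivative (\<lambda>s. \<chi> i. s * d i)) (at t)"
    unfolding d_def using \<gamma> \<open>open S\<close> \<open>t \<in> S\<close>
    by (intro has_derivative_vec_componentwise holomorphic_derivI)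
  moreover obtain L where L: "(h has_derivative L) (at (\<gamma> t))" "\<forall>c v. L (c *s v) = c * L v"
    using h assms(4) \<open>t \<in> S\<close> unfolding holo_n_def by blast
  ultimately have "((\<lambda>t. h (\<gamma> t)) has_derivative (\<lambda>s. L (\<chi> i. s * d i))) (at t)"
    using has_derivative_compose by blast
  moreover have "L (\<chi> i. s * d i) = L (\<chi> i. d i) * s" for s
  proof -
    have "(\<chi> i. s * d i) = s *s (\<chi> i. d i)"
      by (simp add: vec_eq_iff)
    then show ?thesis
      using L(2) by (simp add: mult.commute)
  qed
  ultimately show "\<exists>f'. ((\<lambda>t. h (\<gamma> t)) has_field_derivative f') (at t)"
    by (auto simp: has_field_derivative_def)
qed

lemma curve_maps_ball_into_ball:
  fixes \<gamma> :: "complex \<Rightarrow> complex^'n"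
  assumes "r > 0" "\<And>i. (\<lambda>t. \<gamma> t $ i) holomorphic_on ball 0 r" "\<gamma> 0 = 0" "e > 0"
  obtains d where "d > 0" "d \<le> r" "\<gamma> ` ball 0 d \<subseteq> ball 0 e"
proof -
  have "continuous_on (ball 0 r) (\<lambda>t. \<chi> i. \<gamma> t $ i)"
    using assms(2) by (intro continuous_on_vec_lambda holomorphic_on_imp_continuous_on)
  then have "isCont \<gamma> 0"
    using assms(1) by (simp add: continuous_on_eq_continuous_at)
  then obtain d where "d > 0" "\<And>t. dist t 0 < d \<Longrightarrow> dist (\<gamma> t) (\<gamma> 0) < e"
    unfolding continuous_at_eps_delta using assms(4) by blast
  then show ?thesis
    using that[of "min d r"] assms(1,3) by (force simp: dist_norm)
qed

lemma cord_eqI: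
  assumes "\<And>i. vanishes_to_order k (\<lambda>t. \<gamma> t $ i)" "ord0 (\<lambda>t. \<gamma> t $ j) = enat k"
  shows "cord \<gamma> = enat k"
  unfolding cord_def
proof (rule Min_eqI)
  show "enat k \<le> x" if "x \<in> range (\<lambda>i. ord0 (\<lambda>t. \<gamma> t $ i))" for x
    using that assms(1) ord0_ge_if_vanishes_to_order by blast
  show "enat k \<in> range (\<lambda>i. ord0 (\<lambda>t. \<gamma> t $ i))"
    using assms(2) by (metis rangeI)
qed simp

lemma curves_cordI:
  fixes \<gamma> :: "complex \<Rightarrow> complex^'n"
  assumes "r > 0" "\<And>i. (\<lambda>t. \<gamma> t $ i) holomorphic_on ball 0 r" "\<gamma> 0 = 0"
    and "\<And>i. vanishes_to_order k (\<lambda>t. \<gamma> t $ i)" "ord0 (\<lambda>t. \<gamma> t $ j) = enat k"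
  shows "\<gamma> \<in> curves" "cord \<gamma> = enat k"
proof -
  have "\<not> (\<exists>d>0. \<forall>t\<in>ball 0 d. \<gamma> t = 0)"
  proof
    assume "\<exists>d>0. \<forall>t\<in>ball 0 d. \<gamma> t = 0"
    then obtain d where "d > 0" "\<forall>t\<in>ball 0 d. \<gamma> t = 0"
      by blast
    then have "vanishes_to_order (Suc k) (\<lambda>t. \<gamma> t $ j)"
      by (intro vanishes_to_order_cong_ball[OF vanishes_to_order_0, of d]) auto
    then have "enat (Suc k) \<le> enat k"
      using ord0_ge_if_vanishes_to_order assms(5) by metis
    then show False
      by simp
  qed
  then show "\<gamma> \<in> curves"
    unfolding curves_def using assms(1-3) by blast
  show "cord \<gamma> = enat k"
    using assms(4,5) by (rule cord_eqI)
qed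

lemma curve_cord_attained:
  assumes "\<gamma> \<in> curves"
  obtains j k where "cord \<gamma> = enat k" "ord0 (\<lambda>t. \<gamma> t $ j) = enat k"
proof -
  obtain r where r: "r > 0" "\<And>i. (\<lambda>t. \<gamma> t $ i) holomorphic_on ball 0 r"
    and nonconst: "\<not> (\<exists>d>0. \<forall>t\<in>ball 0 d. \<gamma> t = 0)"
    using assms unfolding curves_def by blast
  have "\<exists>i. ord0 (\<lambda>t. \<gamma> t $ i) \<noteq> \<infinity>"
  proof (rule ccontr)
    assume "\<nexists>i. ord0 (\<lambda>t. \<gamma> t $ i) \<noteq> \<infinity>"
    then have "\<gamma> t $ i = 0" if "t \<in> ball 0 r" for t i
      using ord0_infinity_imp_zero[OF r(2) _ that] by blast
    then have "\<forall>t\<in>ball 0 r. \<gamma> t = 0"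
      by (simp add: vec_eq_iff)
    then show False
      using nonconst r(1) by blast
  qed
  then obtain i where i: "ord0 (\<lambda>t. \<gamma> t $ i) \<noteq> \<infinity>"
    by blast
  have "cord \<gamma> \<le> ord0 (\<lambda>t. \<gamma> t $ i)"
    unfolding cord_def by (rule Min_le) auto
  then obtain k where k: "cord \<gamma> = enat k"
    using i by (cases "cord \<gamma>") auto
  have "cord \<gamma> \<in> range (\<lambda>i. ord0 (\<lambda>t. \<gamma> t $ i))"
    unfolding cord_def by (intro Min_in) auto
  then obtain j where "cord \<gamma> = ord0 (\<lambda>t. \<gamma> t $ j)"
    by blast
  then have "ord0 (\<lambda>t. \<gamma> t $ j) = enat k"
    using k by simp
  with k show ?thesis
    by (rule that)
qed

lemma vratio_ge_if_vanishes_to_order: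
  assumes "cord \<gamma> = enat k" "vanishes_to_order n (g \<circ> \<gamma>)"
  shows "ereal (real n / real k) \<le> vratio g \<gamma>"
proof (cases "ord0 (g \<circ> \<gamma>)")
  case (enat m)
  then have "n \<le> m"
    using ord0_ge_if_vanishes_to_order[OF assms(2)] by simp
  then show ?thesis
    using enat assms(1) by (simp add: vratio_def divide_right_mono)
qed (simp add: vratio_def)

lemma vratio_le_if_ord0_eq:
  assumes "cord \<gamma> = enat k" "ord0 (g \<circ> \<gamma>) = enat (p * k)"
  shows "vratio g \<gamma> \<le> ereal (real p)"
  using assms by (cases "k = 0") (simp_all add: vratio_def)

lemma vanishes_to_order_comp_ideal_gen:
  assumes \<gamma>: "\<gamma> \<in> curves" and F: "\<forall>f\<in>set F. vanishes_to_order n (f \<circ> \<gamma>)"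
    and "g \<in> ideal_gen F"
  shows "vanishes_to_order n (g \<circ> \<gamma>)"
proof -
  obtain e hs where e: "e > 0" and len: "length hs = length F"
    and hol: "\<forall>h\<in>set hs. holo_n (ball 0 e) h"
    and g: "\<forall>x\<in>ball 0 e. g x = (\<Sum>i<length F. (hs!i) x * (F!i) x)"
    using \<open>g \<in> ideal_gen F\<close> unfolding ideal_gen_def by blast
  obtain r where r: "r > 0" "\<And>i. (\<lambda>t. \<gamma> t $ i) holomorphic_on ball 0 r" "\<gamma> 0 = 0"
    using \<gamma> unfolding curves_def by blast
  obtain d where d: "d > 0" "d \<le> r" "\<gamma> ` ball 0 d \<subseteq> ball 0 e"
    using curve_maps_ball_into_ball[OF r e] .
  have "(\<lambda>t. (hs!i) (\<gamma> t)) holomorphic_on ball 0 d" if "i < length F" for i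
  proof (rule holomorphic_on_holo_n_comp[of "ball 0 e"])
    show "holo_n (ball 0 e) (hs!i)"
      using hol len that by simp
    show "(\<lambda>t. \<gamma> t $ j) holomorphic_on ball 0 d" for j
      using holomorphic_on_subset[OF r(2)[of j]] d(2) by (simp add: subset_ball)
  qed (use d(3) in auto)
  moreover have "vanishes_to_order n (\<lambda>t. (F!i) (\<gamma> t))" if "i < length F" for i
    using F that by (auto simp: o_def)
  ultimately have "vanishes_to_order n (\<lambda>t. \<Sum>i<length F. (hs!i) (\<gamma> t) * (F!i) (\<gamma> t))"
    by (intro vanishes_to_order_sum vanishes_to_order_mult_left[OF d(1)]) auto
  moreover have "(g \<circ> \<gamma>) t = (\<Sum>i<length F. (hs!i) (\<gamma> t) * (F!i) (\<gamma> t))" if "t \<in> ball 0 d" for t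
  proof -
    have "\<gamma> t \<in> ball 0 e"
      using d(3) that by blast
    then show ?thesis
      using g by simp
  qed
  ultimately show ?thesis
    using vanishes_to_order_cong_ball d(1) by blast
qed

lemma vratio_ge_if_generators_vanish:
  assumes "\<gamma> \<in> curves" "cord \<gamma> = enat k" "\<forall>f\<in>set F. vanishes_to_order n (f \<circ> \<gamma>)"
    and "g \<in> ideal_gen F"
  shows "ereal (real n / real k) \<le> vratio g \<gamma>"
  using assms by (intro vratio_ge_if_vanishes_to_order vanishes_to_order_comp_ideal_gen)

lemma T1_ideal_gen_ge_if_curve:
  assumes "\<gamma> \<in> curves" "cord \<gamma> = enat k" "\<forall>f\<in>set F. vanishes_to_order n (f \<circ> \<gamma>)"
  shows "ereal (real n / real k) \<le> T1 (ideal_gen F)"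
  unfolding T1_def
  by (rule SUP_upper2[OF assms(1)], rule INF_greatest)
    (rule vratio_ge_if_generators_vanish[OF assms])

lemma T1_le_if_component_powers:
  assumes "\<And>i. (\<lambda>x::complex^'n. (x $ i) ^ p) \<in> I"
  shows "T1 I \<le> ereal (real p)"
  unfolding T1_def
proof (rule SUP_least)
  fix \<gamma> :: "complex \<Rightarrow> complex^'n" assume "\<gamma> \<in> curves"
  then obtain r where r: "r > 0" "\<And>i. (\<lambda>t. \<gamma> t $ i) holomorphic_on ball 0 r"
    unfolding curves_def by blast
  obtain j k where k: "cord \<gamma> = enat k" "ord0 (\<lambda>t. \<gamma> t $ j) = enat k"
    using curve_cord_attained[OF \<open>\<gamma> \<in> curves\<close>] .
  have "ord0 ((\<lambda>x. (x $ j) ^ p) \<circ> \<gamma>) = enat (p * k)"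
    using ord0_power[OF r(1) r(2) k(2)] by (simp add: o_def)
  then have "vratio (\<lambda>x. (x $ j) ^ p) \<gamma> \<le> ereal (real p)"
    using k(1) by (rule vratio_le_if_ord0_eq[rotated])
  then show "(INF g\<in>I. vratio g \<gamma>) \<le> ereal (real p)"
    using assms by (meson INF_lower2)
qed

lemma linear_fun_component: "linear_fun (\<lambda>x::complex^'n. x $ i)"
  unfolding linear_fun_def
proof (intro exI allI)
  fix x :: "complex^'n"
  have "(\<Sum>j\<in>UNIV. axis i 1 $ j * x $ j) = (\<Sum>j\<in>UNIV. if j = i then x $ j else 0)"
    by (rule sum.cong) (auto simp: axis_def)
  then show "x $ i = (\<Sum>j\<in>UNIV. axis i 1 $ j * x $ j)"
    by simp
qed

lemma Tq_2: "Tq 2 F = (INF w\<in>Collect linear_fun. T1 (ideal_gen (F @ [w])))"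
proof -
  have singletons:
    "{W. length W = 2 - 1 \<and> (\<forall>w\<in>set W. linear_fun w)} = (\<lambda>w. [w]) ` Collect linear_fun"
    by (auto simp: length_Suc_conv)
  show ?thesis
    unfolding Tq_def singletons image_image ..
qed

lemma ideal_gen_3I:
  fixes g :: "complex^'n \<Rightarrow> complex"
  assumes "e > 0" "holo_n (ball 0 e) g"
    and "holo_n (ball 0 e) h0" "holo_n (ball 0 e) h1" "holo_n (ball 0 e) h2"
    and "\<And>x. x \<in> ball 0 e \<Longrightarrow> g x = h0 x * f0 x + h1 x * f1 x + h2 x * f2 x"
  shows "g \<in> ideal_gen [f0, f1, f2]"
proof -
  have "(\<Sum>i<3. ([h0, h1, h2] ! i) x * ([f0, f1, f2] ! i) x) =
      h0 x * f0 x + h1 x * f1 x + h2 x * f2 x" for x :: "complex^'n"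
    by (simp add: numeral_3_eq_3 add.assoc)
  then show ?thesis
    unfolding ideal_gen_def using assms
    by (intro CollectI exI[of _ e] conjI exI[of _ "[h0, h1, h2]"]) auto
qed

abbreviation V_equation :: "complex^3 \<Rightarrow> complex" where
  "V_equation \<equiv> \<lambda>z. (z $ 1) ^ 3 - z $ 3 * z $ 2"

abbreviation z2_square :: "complex^3 \<Rightarrow> complex" where
  "z2_square \<equiv> \<lambda>z. (z $ 2)\<^sup>2"

lemma component_cubes_in_ideal:
  "(\<lambda>x::complex^3. (x $ i) ^ 3) \<in> ideal_gen [V_equation, z2_square, \<lambda>z. z $ 3]"
proof -
  note holo_n_intros = holo_n_const holo_n_component holo_n_mult holo_n_power
  consider "i = 1" | "i = 2" | "i = 3"
    using exhaust_3 by blast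
  then show ?thesis
  proof cases
    case 1
    show ?thesis
      by (rule ideal_gen_3I[of 1 _ "\<lambda>_. 1" "\<lambda>_. 0" "\<lambda>x. x $ 2"];
        (intro holo_n_intros)?) (simp_all add: 1 algebra_simps)
  next
    case 2
    show ?thesis
      by (rule ideal_gen_3I[of 1 _ "\<lambda>_. 0" "\<lambda>x. x $ 2" "\<lambda>_. 0"];
        (intro holo_n_intros)?) (simp_all add: 2 power3_eq_cube power2_eq_square)
  next
    case 3
    show ?thesis
      by (rule ideal_gen_3I[of 1 _ "\<lambda>_. 0" "\<lambda>_. 0" "\<lambda>x. (x $ 3) ^ 2"];
        (intro holo_n_intros)?) (simp_all add: 3 power3_eq_cube power2_eq_square)
  qed
qed

lemma T1_with_z3_le_3:
  "T1 (ideal_gen [V_equation, z2_square, \<lambda>z. z $ 3]) \<le> 3"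
  using T1_le_if_component_powers[OF component_cubes_in_ideal] by simp

(* On the plane z3 + a z1 + b z2 = 0 the equation of V reads z1^3 + a z1 z2 + b z2^2 = 0;
   putting z2 = m z1 gives z1 = -m (a + b m). *)
definition section_curve :: "complex \<Rightarrow> complex \<Rightarrow> complex \<Rightarrow> complex^3" where
  "section_curve a b m = vector [- m * (a + b * m), - m\<^sup>2 * (a + b * m), m * (a + b * m)\<^sup>2]"

lemma section_curve_nth [simp]:
  "section_curve a b m $ 1 = - m * (a + b * m)"
  "section_curve a b m $ 2 = - m\<^sup>2 * (a + b * m)"
  "section_curve a b m $ 3 = m * (a + b * m)\<^sup>2"
  by (simp_all add: section_curve_def)

lemma section_curve_in_V:
  "(section_curve a b m $ 1) ^ 3 - section_curve a b m $ 3 * section_curve a b m $ 2 = 0"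
  by (simp add: algebra_simps power2_eq_square power3_eq_cube)

lemma section_curve_in_plane:
  "section_curve a b m $ 3 + a * section_curve a b m $ 1 + b * section_curve a b m $ 2 = 0"
  by (simp add: algebra_simps power2_eq_square)

lemma section_curve_is_curve:
  assumes "a \<noteq> 0"
  shows "section_curve a b \<in> curves" "cord (section_curve a b) = enat 1"
proof -
  have "vanishes_to_order 1 (\<lambda>t. section_curve a b t $ i)" for i
  proof -
    have "vanishes_to_order 1 (\<lambda>t. section_curve a b t $ 1)"
      by (rule vanishes_to_orderI[of "\<lambda>t. - (a + b * t)"])
        (auto intro!: holomorphic_intros simp: algebra_simps)
    moreover have "vanishes_to_order 1 (\<lambda>t. section_curve a b t $ 2)"
      by (rule vanishes_to_orderI[of "\<lambda>t. - t * (a + b * t)"])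
        (auto intro!: holomorphic_intros simp: power2_eq_square)
    moreover have "vanishes_to_order 1 (\<lambda>t. section_curve a b t $ 3)"
      by (rule vanishes_to_orderI[of "\<lambda>t. (a + b * t)\<^sup>2"]) (auto intro!: holomorphic_intros)
    ultimately show ?thesis
      using exhaust_3[of i] by auto
  qed
  moreover have "ord0 (\<lambda>t. section_curve a b t $ 1) = enat 1"
    by (rule ord0_eq_if_factor[of 1 "\<lambda>t. - (a + b * t)"])
      (use assms in \<open>auto intro!: holomorphic_intros simp: algebra_simps\<close>)
  moreover have "(\<lambda>t. section_curve a b t $ i) holomorphic_on ball 0 1" for i
    using exhaust_3[of i] by (auto intro!: holomorphic_intros)
  moreover have "section_curve a b 0 = 0"
    by (simp add: vec_eq_iff forall_3)
  ultimately show "section_curve a b \<in> curves" "cord (section_curve a b) = enat 1"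
    using curves_cordI[of 1 "section_curve a b" 1 1] by auto
qed

lemma inj_on_section_curve:
  assumes "a \<noteq> 0" "b \<noteq> 0"
  shows "inj_on (section_curve a b) (ball 0 (cmod a / (2 * cmod b)))"
proof
  fix s t
  assume s: "s \<in> ball 0 (cmod a / (2 * cmod b))" and t: "t \<in> ball 0 (cmod a / (2 * cmod b))"
    and eq: "section_curve a b s = section_curve a b t"
  have "a + b * (s + t) \<noteq> 0"
  proof
    assume "a + b * (s + t) = 0"
    then have "cmod a = cmod b * cmod (s + t)"
      by (metis add_eq_0_iff norm_minus_cancel norm_mult)
    also have "\<dots> \<le> cmod b * (cmod s + cmod t)"
      by (simp add: mult_left_mono norm_triangle_ineq)
    also have "\<dots> < cmod b * (cmod a / (2 * cmod b) + cmod a / (2 * cmod b))"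
      using s t assms by (intro mult_strict_left_mono add_strict_mono) auto
    also have "\<dots> = cmod a"
      using assms by (simp add: field_simps)
    finally show False
      by simp
  qed
  moreover have "(s - t) * (a + b * (s + t)) = 0"
    using arg_cong[OF eq, of "\<lambda>z. z $ 1"] by (simp add: algebra_simps power2_eq_square)
  ultimately show "s = t"
    by simp
qed

lemma comp_param_section_curve:
  assumes "a \<noteq> 0" "b \<noteq> 0"
  shows "comp_param ({z. (z $ 1) ^ 3 - z $ 3 * z $ 2 = 0} \<inter> {z. z $ 3 + a * z $ 1 + b * z $ 2 = 0})
           (section_curve a b)"
  unfolding comp_param_def
  using assms section_curve_is_curve(1) section_curve_in_V section_curve_in_plane
    inj_on_section_curve
  by (intro conjI exI[of _ "cmod a / (2 * cmod b)"]) auto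

lemma generators_vanish_along_section_curve:
  "vanishes_to_order 4 (V_equation \<circ> section_curve a b)"
  "vanishes_to_order 4 (z2_square \<circ> section_curve a b)"
proof -
  show "vanishes_to_order 4 (V_equation \<circ> section_curve a b)"
    using section_curve_in_V[of a b] vanishes_to_order_0 by (simp add: o_def)
  show "vanishes_to_order 4 (z2_square \<circ> section_curve a b)"
  proof (rule vanishes_to_orderI[of "\<lambda>t. (a + b * t)\<^sup>2"])
    show "(\<lambda>t. (a + b * t)\<^sup>2) holomorphic_on UNIV"
      by (intro holomorphic_intros)
  qed (simp add: power_mult_distrib flip: power_mult)
qed

definition cusp_curve :: "complex \<Rightarrow> complex \<Rightarrow> complex^3" where
  "cusp_curve b t = vector [t\<^sup>2, t ^ 3, - b * t ^ 3]"

lemma cusp_curve_nth [simp]: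
  "cusp_curve b t $ 1 = t\<^sup>2" "cusp_curve b t $ 2 = t ^ 3" "cusp_curve b t $ 3 = - b * t ^ 3"
  by (simp_all add: cusp_curve_def)

lemma cusp_curve_is_curve: "cusp_curve b \<in> curves" "cord (cusp_curve b) = enat 2"
proof -
  have "vanishes_to_order 2 (\<lambda>t. cusp_curve b t $ i)" for i
  proof -
    have "vanishes_to_order 2 (\<lambda>t. cusp_curve b t $ 1)"
      by (rule vanishes_to_orderI[of "\<lambda>_. 1"]) auto
    moreover have "vanishes_to_order 2 (\<lambda>t. cusp_curve b t $ 2)"
      by (rule vanishes_to_orderI[of "\<lambda>t. t"]) (auto simp: power2_eq_square power3_eq_cube)
    moreover have "vanishes_to_order 2 (\<lambda>t. cusp_curve b t $ 3)"
      by (rule vanishes_to_orderI[of "\<lambda>t. - b * t"])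
        (auto intro!: holomorphic_intros simp: power2_eq_square power3_eq_cube)
    ultimately show ?thesis
      using exhaust_3[of i] by auto
  qed
  moreover have "ord0 (\<lambda>t. cusp_curve b t $ 1) = enat 2"
    by (rule ord0_eq_if_factor[of 1 "\<lambda>_. 1"]) auto
  moreover have "(\<lambda>t. cusp_curve b t $ i) holomorphic_on ball 0 1" for i
    using exhaust_3[of i] by (auto intro!: holomorphic_intros)
  moreover have "cusp_curve b 0 = 0"
    by (simp add: vec_eq_iff forall_3)
  ultimately show "cusp_curve b \<in> curves" "cord (cusp_curve b) = enat 2"
    using curves_cordI[of 1 "cusp_curve b" 2 1] by auto
qed

lemma generators_vanish_along_cusp_curve:
  "vanishes_to_order 6 (V_equation \<circ> cusp_curve b)"
  "vanishes_to_order 6 (z2_square \<circ> cusp_curve b)"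
  by (rule vanishes_to_orderI[of "\<lambda>_. 1 + b"], simp,
      simp add: algebra_simps flip: power_mult power_add)
    (rule vanishes_to_orderI[of "\<lambda>_. 1"], simp, simp flip: power_mult)

definition z3_axis :: "complex \<Rightarrow> complex^3" where
  "z3_axis t = vector [0, 0, t]"

lemma z3_axis_nth [simp]: "z3_axis t $ 1 = 0" "z3_axis t $ 2 = 0" "z3_axis t $ 3 = t"
  by (simp_all add: z3_axis_def)

lemma z3_axis_is_curve: "z3_axis \<in> curves" "cord z3_axis = enat 1"
proof -
  have "vanishes_to_order 1 (\<lambda>t. z3_axis t $ i)" for i
    using exhaust_3[of i] vanishes_to_order_0 vanishes_to_orderI[of "\<lambda>_. 1" "\<lambda>t. t" 1] by auto
  moreover have "ord0 (\<lambda>t. z3_axis t $ 3) = enat 1"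
    by (rule ord0_eq_if_factor[of 1 "\<lambda>_. 1"]) auto
  moreover have "(\<lambda>t. z3_axis t $ i) holomorphic_on ball 0 1" for i
    using exhaust_3[of i] by (auto intro!: holomorphic_intros)
  moreover have "z3_axis 0 = 0"
    by (simp add: vec_eq_iff forall_3)
  ultimately show "z3_axis \<in> curves" "cord z3_axis = enat 1"
    using curves_cordI[of 1 z3_axis 1 3] by auto
qed

lemma T1_with_linear_form_ge_3:
  assumes "linear_fun w"
  shows "3 \<le> T1 (ideal_gen [V_equation, z2_square, w])"
proof -
  obtain c :: "complex^3" where c: "\<And>x. w x = c $ 1 * x $ 1 + c $ 2 * x $ 2 + c $ 3 * x $ 3"
    using assms unfolding linear_fun_def by (auto simp: sum_3)
  consider "c $ 3 = 0" | "c $ 3 \<noteq> 0" "c $ 1 \<noteq> 0" | "c $ 3 \<noteq> 0" "c $ 1 = 0"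
    by blast
  then show ?thesis
  proof cases
    case 1
    have "w \<circ> z3_axis = (\<lambda>_. 0)"
      by (simp add: c 1 o_def)
    then have "ereal (real 3 / real 1) \<le> T1 (ideal_gen [V_equation, z2_square, w])"
      using z3_axis_is_curve
      by (intro T1_ideal_gen_ge_if_curve) (auto simp: o_def vanishes_to_order_0)
    then show ?thesis
      by simp
  next
    case 2
    define a b where "a = c $ 1 / c $ 3" and "b = c $ 2 / c $ 3"
    have "w x = c $ 3 * (x $ 3 + a * x $ 1 + b * x $ 2)" for x
      using 2 by (simp add: c a_def b_def algebra_simps)
    then have "w \<circ> section_curve a b = (\<lambda>_. 0)"
      using section_curve_in_plane by (simp add: o_def)
    moreover have "a \<noteq> 0"
      using 2 by (simp add: a_def)
    ultimately have "ereal (real 4 / real 1) \<le> T1 (ideal_gen [V_equation, z2_square, w])"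
      using section_curve_is_curve[of a b] generators_vanish_along_section_curve[of a b]
      by (intro T1_ideal_gen_ge_if_curve) (auto simp: vanishes_to_order_0)
    then show ?thesis
      by (rule order_trans[rotated]) simp
  next
    case 3
    define b where "b = c $ 2 / c $ 3"
    have "w \<circ> cusp_curve b = (\<lambda>_. 0)"
      using 3 by (simp add: o_def c b_def)
    then have "ereal (real 6 / real 2) \<le> T1 (ideal_gen [V_equation, z2_square, w])"
      using cusp_curve_is_curve[of b] generators_vanish_along_cusp_curve[of b]
      by (intro T1_ideal_gen_ge_if_curve) (auto simp: vanishes_to_order_0)
    then show ?thesis
      by simp
  qed
qed

theorem mainTheorem4:
  fixes f1 f2 :: "complex^3 \<Rightarrow> complex"
  assumes "\<And>z. f1 z = (z $ 1) ^ 3 - z $ 3 * z $ 2"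
      and "\<And>z. f2 z = (z $ 2) ^ 2"
  shows "Tq 2 [f1, f2] = 3 \<and>
    (\<forall>a b :: complex. a \<noteq> 0 \<longrightarrow> b \<noteq> 0 \<longrightarrow>
       (\<exists>\<gamma>. comp_param ({z. f1 z = 0} \<inter> {z. z $ 3 + a * z $ 1 + b * z $ 2 = 0}) \<gamma> \<and>
             (\<forall>g\<in>ideal_gen [f1, f2]. vratio g \<gamma> \<ge> 4)))"
proof -
  have f1: "f1 = V_equation" and f2: "f2 = z2_square"
    by (rule ext, rule assms)+
  have le: "Tq 2 [f1, f2] \<le> 3"
    unfolding Tq_2 f1 f2 append_Cons append_Nil
    by (rule INF_lower2[where i = "\<lambda>z. z $ 3"], simp add: linear_fun_component)
      (rule T1_with_z3_le_3)
  have ge: "3 \<le> Tq 2 [f1, f2]"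
    unfolding Tq_2 f1 f2 append_Cons append_Nil
    by (rule INF_greatest, rule T1_with_linear_form_ge_3) simp
  have witness:
    "comp_param ({z. f1 z = 0} \<inter> {z. z $ 3 + a * z $ 1 + b * z $ 2 = 0}) (section_curve a b)
      \<and> (\<forall>g\<in>ideal_gen [f1, f2]. 4 \<le> vratio g (section_curve a b))"
    if "a \<noteq> 0" "b \<noteq> 0" for a b
  proof (intro conjI ballI)
    show "comp_param ({z. f1 z = 0} \<inter> {z. z $ 3 + a * z $ 1 + b * z $ 2 = 0}) (section_curve a b)"
      using comp_param_section_curve[OF that] by (simp add: f1)
    fix g assume "g \<in> ideal_gen [f1, f2]"
    then have "ereal (real 4 / real 1) \<le> vratio g (section_curve a b)"
      by (rule vratio_ge_if_generators_vanish[OF section_curve_is_curve[OF \<open>a \<noteq> 0\<close>], rotated])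
        (simp add: f1 f2 generators_vanish_along_section_curve)
    then show "4 \<le> vratio g (section_curve a b)"
      by simp
  qed
  show ?thesis
  proof (intro conjI allI impI)
    show "Tq 2 [f1, f2] = 3"
      using le ge by (rule antisym)
    fix a b :: complex assume "a \<noteq> 0" "b \<noteq> 0"
    then show "\<exists>\<gamma>. comp_param ({z. f1 z = 0} \<inter> {z. z $ 3 + a * z $ 1 + b * z $ 2 = 0}) \<gamma> \<and>
        (\<forall>g\<in>ideal_gen [f1, f2]. vratio g \<gamma> \<ge> 4)"
      using witness by blast
  qed
qed

end
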